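(* Let $S$ be a finite set and let $\mathcal{F}\subseteq 2^S$ be a non-trivial family, and let $\mathcal{I}=\{Y\subseteq S\mid \exists X\in\mathcal{F},\ Y\subseteq X\}$ be the downset of $(2^S,\subseteq)$ generated by $\mathcal{F}$. Let $\mathcal{F}'=\{2^X\mid X\in\mathcal{F}\}$ (which is also non-trivial) and let $L$ be the intersection lattice of $\mathcal{F}'$. Then $\mathrm{ncpd}(\mathcal{I})=\mathrm{nci}(L)$.
   Context: A finite family $\mathcal{F}$ of sets is non-trivial if it is non-empty and no $X\in\mathcal{F}$ satisfies $X=\bigcup\mathcal{F}$. For such $\mathcal{F}$ and non-empty $\mathcal{T}\subseteq\mathcal{F}$, let $S_{\mathcal{T}}=\bigcap\mathcal{T}$, and let $S_\emptyset=\bigcup\mathcal{F}$. The intersection lattice of $\mathcal{F}$ is $\mathbb{L}_{\mathcal{F}}=(\{S_{\mathcal{T}}\mid\mathcal{T}\subseteq\mathcal{F}\},\subseteq)$, with greatest element $\hat 1=\bigcup\mathcal{F}$. The Möbius function of a finite poset $P$ is given for $x\le y$ by $\mu_P(y,y)=1$ and $\mu_P(x,y)=-\sum_{x<z\le y}\mu_P(z,y)$; $\mathrm{nci}(L)=\{U\in L\mid U\neq\hat 1,\ \mu_L(U,\hat 1)\neq 0\}$. For a configuration $\mathcal{C}\subseteq 2^S$, the generalized Möbius function $\hat\mu_{\mathcal{C}}:2^S\to\mathbb{Z}$ is defined by top-down induction: $\hat\mu_{\mathcal{C}}(X)=[X\in\mathcal{C}]-\sum_{X\subsetneq X'\subseteq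 S}\hat\mu_{\mathcal{C}}(X')$ (with $[X\in\mathcal{C}]\in\{0,1\}$ the indicator). The non-cancelling principal downsets are $\mathrm{ncpd}(\mathcal{C})=\{2^X\mid X\subseteq S,\ \hat\mu_{\mathcal{C}}(X)\neq 0\}$, where $2^X=\{Y\subseteq S\mid Y\subseteq X\}$. *)

theory Defs
  imports Main
begin

definition nontrivial_family :: "'a set set \<Rightarrow> bool" where
  "nontrivial_family F \<longleftrightarrow> finite F \<and> F \<noteq> {} \<and> (\<forall>X\<in>F. X \<noteq> \<Union>F)"

definition int_lattice :: "'a set set \<Rightarrow> 'a set set" where
  "int_lattice F = {\<Inter>T | T. T \<subseteq> F \<and> T \<noteq> {}} \<union> {\<Union>F}"

function mobius :: "'a set set \<Rightarrow> 'a set \<Rightarrow> 'a set \<Rightarrow> int" where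
  "mobius P x y =
    (if finite P \<and> x \<in> P \<and> y \<in> P \<and> x \<subseteq> y then
       (if x = y then 1
        else - (\<Sum>z\<in>{z\<in>P. x \<subset> z \<and> z \<subseteq> y}. mobius P z y))
     else 0)"
  by auto
termination
proof (relation "measure (\<lambda>(P, x, y). card {w\<in>P. x \<subset> w})")
  fix P :: "'a set set" and x y z
  assume h: "finite P \<and> x \<in> P \<and> y \<in> P \<and> x \<subseteq> y" "z \<in> {z\<in>P. x \<subset> z \<and> z \<subseteq> y}"
  have "{w\<in>P. z \<subset> w} \<subset> {w\<in>P. x \<subset> w}" using h by auto
  then have "card {w\<in>P. z \<subset> w} < card {w\<in>P. x \<subset> w}"
    using h by (intro psubset_card_mono) auto
  then show "((P, z, y), P, x, y) \<in> measure (\<lambda>(P, x, y). card {w\<in>P. x \<subset> w})" by simp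
qed simp_all

definition nci :: "'a set set \<Rightarrow> 'a set \<Rightarrow> 'a set set" where
  "nci L t = {U \<in> L. U \<noteq> t \<and> mobius L U t \<noteq> 0}"

function gen_mobius :: "'a set \<Rightarrow> 'a set set \<Rightarrow> 'a set \<Rightarrow> int" where
  "gen_mobius S C X =
    (if finite S \<and> X \<subseteq> S then
       (if X \<in> C then 1 else 0) - (\<Sum>X'\<in>{X'. X \<subset> X' \<and> X' \<subseteq> S}. gen_mobius S C X')
     else 0)"
  by auto
termination
proof (relation "measure (\<lambda>(S, C, X). card {W. X \<subset> W \<and> W \<subseteq> S})")
  fix S :: "'a set" and C :: "'a set set" and X X'
  assume h: "finite S \<and> X \<subseteq> S" "X' \<in> {X'. X \<subset> X' \<and> X' \<subseteq> S}"
  have "{W. X' \<subset> W \<and> W \<subseteq> S} \<subseteq> {W. X \<subset> W \<and> W \<subseteq> S}" using h by blast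
  moreover have "X' \<in> {W. X \<subset> W \<and> W \<subseteq> S}" "X' \<notin> {W. X' \<subset> W \<and> W \<subseteq> S}" using h by auto
  ultimately have "{W. X' \<subset> W \<and> W \<subseteq> S} \<subset> {W. X \<subset> W \<and> W \<subseteq> S}" by blast
  moreover have "finite {W. X \<subset> W \<and> W \<subseteq> S}"
  proof (rule finite_subset[of _ "Pow S"])
    show "{W. X \<subset> W \<and> W \<subseteq> S} \<subseteq> Pow S" by blast
    show "finite (Pow S)" using h by simp
  qed
  ultimately have "card {W. X' \<subset> W \<and> W \<subseteq> S} < card {W. X \<subset> W \<and> W \<subseteq> S}"
    by (simp add: psubset_card_mono)
  then show "((S, C, X'), S, C, X) \<in> measure (\<lambda>(S, C, X). card {W. X \<subset> W \<and> W \<subseteq> S})" by simp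
qed simp_all

text \<open>Non-cancelling principal downsets; 2^X = {Y subset of S. Y subset of X} = Pow X for X in 2^S.\<close>
definition ncpd :: "'a set \<Rightarrow> 'a set set \<Rightarrow> 'a set set set" where
  "ncpd S C = {{Y. Y \<subseteq> S \<and> Y \<subseteq> X} | X. X \<subseteq> S \<and> gen_mobius S C X \<noteq> 0}"

end

theory Submission
  imports Defs
begin

(* Let L be the intersection lattice of the principal downsets 2^A, A \<in> F, with top
   element 1.  Nontriviality of F says exactly that no 2^X equals 1, and the elements of L
   below 1 are the downsets 2^X with X an intersection of members of F.  The generalized
   Moebius function of I is the unique solution of sum_{X' \<supseteq> X} g X' = [X \<in> I], and
   g X = -mu_L(2^X, 1) solves it: when X \<in> I, the elements of L other than 1 that contain
   2^X form the half-open interval [c, 1) with c = 2^(\<Inter>{A \<in> F. X \<subseteq> A}), whose Moebius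
   values sum to -1; when X \<notin> I there are no such elements. *)

declare mobius.simps[simp del] gen_mobius.simps[simp del]

lemma mobius_nonzero_imp_mem:
  assumes "mobius P x y \<noteq> 0"
  shows "x \<in> P"
  using assms by (subst (asm) mobius.simps) (auto split: if_splits)

lemma sum_mobius_half_open_interval:
  assumes P: "finite P" and xy: "x \<in> P" "y \<in> P" "x \<subset> y"
  shows "(\<Sum>z\<in>{z\<in>P. x \<subseteq> z \<and> z \<subset> y}. mobius P z y) = -1"
proof -
  let ?closed = "{z\<in>P. x \<subseteq> z \<and> z \<subseteq> y}"
  let ?open_left = "{z\<in>P. x \<subset> z \<and> z \<subseteq> y}" and ?open_right = "{z\<in>P. x \<subseteq> z \<and> z \<subset> y}"
  have fin: "finite ?closed" using P by simp
  have "(\<Sum>z\<in>?closed. mobius P z y) = mobius P x y + (\<Sum>z\<in>?open_left. mobius P z y)"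
    using fin xy by (subst sum.remove[of _ x]) (auto intro!: sum.cong)
  also have "\<dots> = 0"
    using P xy by (subst mobius.simps) auto
  finally have "(\<Sum>z\<in>?closed. mobius P z y) = 0" .
  moreover have "(\<Sum>z\<in>?closed. mobius P z y) = mobius P y y + (\<Sum>z\<in>?open_right. mobius P z y)"
    using fin xy by (subst sum.remove[of _ y]) (auto intro!: sum.cong)
  moreover have "mobius P y y = 1"
    using P xy by (subst mobius.simps) simp
  ultimately show ?thesis by simp
qed

lemma gen_mobius_eqI:
  assumes S: "finite S"
    and upper_sums: "\<And>X. X \<subseteq> S \<Longrightarrow> (\<Sum>X'\<in>{X'. X \<subseteq> X' \<and> X' \<subseteq> S}. g X') = (if X \<in> C then 1 else 0)"
    and X: "X \<subseteq> S"
  shows "gen_mobius S C X = g X"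
  using X
proof (induction "card (S - X)" arbitrary: X rule: less_induct)
  case less
  let ?above = "{X'. X \<subset> X' \<and> X' \<subseteq> S}"
  have fin: "finite ?above"
    using S by (auto intro: finite_subset[of _ "Pow S"])
  have IH: "gen_mobius S C X' = g X'" if "X' \<in> ?above" for X'
  proof -
    have "S - X' \<subset> S - X" using that less.prems by blast
    then have "card (S - X') < card (S - X)" using S by (intro psubset_card_mono) auto
    then show ?thesis using less.hyps that by auto
  qed
  have "{X'. X \<subseteq> X' \<and> X' \<subseteq> S} = insert X ?above"
    using less.prems by auto
  then have "(if X \<in> C then 1 else 0) = g X + (\<Sum>X'\<in>?above. g X')"
    using upper_sums[OF less.prems] fin by simp
  moreover have "gen_mobius S C X = (if X \<in> C then 1 else 0) - (\<Sum>X'\<in>?above. gen_mobius S C X')"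
    using S less.prems by (subst gen_mobius.simps) simp
  ultimately show ?case
    using IH by simp
qed

lemma int_lattice_le_Union:
  assumes "U \<in> int_lattice F"
  shows "U \<subseteq> \<Union>F"
  using assms unfolding int_lattice_def by blast

lemma finite_int_lattice:
  assumes "finite F"
  shows "finite (int_lattice F)"
proof (rule finite_subset)
  show "int_lattice F \<subseteq> insert (\<Union>F) (Inter ` Pow F)"
    unfolding int_lattice_def by blast
  show "finite (insert (\<Union>F) (Inter ` Pow F))"
    using assms by simp
qed

lemma Union_mem_int_lattice: "\<Union>F \<in> int_lattice F"
  unfolding int_lattice_def by simp

lemma Inter_Pow_image: "\<Inter>(Pow ` T) = Pow (\<Inter>T)"
  by blast

lemma Pow_subset_Pow_iff: "Pow A \<subseteq> Pow B \<longleftrightarrow> A \<subseteq> B"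
  by (metis Pow_mono Pow_iff Pow_top subsetD)

lemma int_lattice_Pow_image:
  "int_lattice (Pow ` F) = {Pow (\<Inter>T) | T. T \<subseteq> F \<and> T \<noteq> {}} \<union> {\<Union>(Pow ` F)}"
proof -
  have "{\<Inter>T | T. T \<subseteq> Pow ` F \<and> T \<noteq> {}} = {Pow (\<Inter>T) | T. T \<subseteq> F \<and> T \<noteq> {}}"
  proof (intro equalityI subsetI)
    fix U assume "U \<in> {\<Inter>T | T. T \<subseteq> Pow ` F \<and> T \<noteq> {}}"
    then obtain T where "U = \<Inter>(Pow ` T)" "T \<subseteq> F" "T \<noteq> {}"
      by (auto simp: subset_image_iff)
    then show "U \<in> {Pow (\<Inter>T) | T. T \<subseteq> F \<and> T \<noteq> {}}"
      by (auto simp only: Inter_Pow_image)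
  next
    fix U assume "U \<in> {Pow (\<Inter>T) | T. T \<subseteq> F \<and> T \<noteq> {}}"
    then obtain T where "U = \<Inter>(Pow ` T)" "T \<subseteq> F" "T \<noteq> {}"
      by (auto simp only: Inter_Pow_image)
    then show "U \<in> {\<Inter>T | T. T \<subseteq> Pow ` F \<and> T \<noteq> {}}"
      by blast
  qed
  then show ?thesis
    unfolding int_lattice_def by simp
qed

lemma int_lattice_Pow_imageE:
  assumes "U \<in> int_lattice (Pow ` F)" "U \<noteq> \<Union>(Pow ` F)"
  obtains T where "T \<subseteq> F" "T \<noteq> {}" "U = Pow (\<Inter>T)"
  using assms unfolding int_lattice_Pow_image by auto

lemma int_lattice_Pow_image_PowE:
  assumes "F \<subseteq> Pow S" "U \<in> int_lattice (Pow ` F)" "U \<noteq> \<Union>(Pow ` F)"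
  obtains X where "X \<subseteq> S" "U = Pow X"
proof -
  obtain T where T: "T \<subseteq> F" "T \<noteq> {}" "U = Pow (\<Inter>T)"
    using assms(2,3) by (rule int_lattice_Pow_imageE)
  have "\<Inter>T \<subseteq> S"
    using assms(1) T(1,2) by blast
  with T(3) show thesis
    using that by blast
qed

lemma Pow_neq_Union_Pow_image:
  assumes "nontrivial_family F"
  shows "Pow X \<noteq> \<Union>(Pow ` F)"
proof
  assume top: "Pow X = \<Union>(Pow ` F)"
  have "X \<in> \<Union>(Pow ` F)"
    unfolding top[symmetric] by simp
  then obtain A where A: "A \<in> F" "X \<subseteq> A"
    by blast
  have "B \<subseteq> X" if "B \<in> F" for B
  proof -
    have "B \<in> Pow X"
      unfolding top using that by blast
    then show ?thesis by simp
  qed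
  with A have "A = \<Union>F" by blast
  with A(1) assms show False
    unfolding nontrivial_family_def by blast
qed

lemma upper_set_int_lattice_Pow_image:
  assumes F: "nontrivial_family F" and A: "A \<in> F" "X \<subseteq> A"
  defines "c \<equiv> Pow (\<Inter>{A\<in>F. X \<subseteq> A})"
  shows "c \<in> int_lattice (Pow ` F)" and "c \<subset> \<Union>(Pow ` F)"
    and "{U \<in> int_lattice (Pow ` F). Pow X \<subseteq> U \<and> U \<noteq> \<Union>(Pow ` F)}
         = {U \<in> int_lattice (Pow ` F). c \<subseteq> U \<and> U \<subset> \<Union>(Pow ` F)}"
proof -
  show "c \<in> int_lattice (Pow ` F)"
    unfolding c_def int_lattice_Pow_image using A by blast
  have "c \<subseteq> Pow A"
    unfolding c_def using A by blast
  then have "c \<subseteq> \<Union>(Pow ` F)"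
    using A by blast
  moreover have "c \<noteq> \<Union>(Pow ` F)"
    unfolding c_def by (rule Pow_neq_Union_Pow_image[OF F])
  ultimately show "c \<subset> \<Union>(Pow ` F)"
    by blast
  have above_iff: "Pow X \<subseteq> U \<longleftrightarrow> c \<subseteq> U"
    if U: "U \<in> int_lattice (Pow ` F)" "U \<noteq> \<Union>(Pow ` F)" for U
  proof -
    obtain T where T: "T \<subseteq> F" "T \<noteq> {}" "U = Pow (\<Inter>T)"
      using U by (rule int_lattice_Pow_imageE)
    have "Pow X \<subseteq> U \<longleftrightarrow> T \<subseteq> {A\<in>F. X \<subseteq> A}"
      using T by auto
    moreover have "c \<subseteq> U \<longleftrightarrow> \<Inter>{A\<in>F. X \<subseteq> A} \<subseteq> \<Inter>T"
      unfolding c_def T(3) by blast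
    moreover have "X \<subseteq> \<Inter>{A\<in>F. X \<subseteq> A}"
      by blast
    ultimately show ?thesis
      using T(1) by (auto intro: Inter_anti_mono)
  qed
  show "{U \<in> int_lattice (Pow ` F). Pow X \<subseteq> U \<and> U \<noteq> \<Union>(Pow ` F)}
         = {U \<in> int_lattice (Pow ` F). c \<subseteq> U \<and> U \<subset> \<Union>(Pow ` F)}"
  proof (rule Collect_cong)
    fix U
    show "U \<in> int_lattice (Pow ` F) \<and> Pow X \<subseteq> U \<and> U \<noteq> \<Union>(Pow ` F) \<longleftrightarrow>
          U \<in> int_lattice (Pow ` F) \<and> c \<subseteq> U \<and> U \<subset> \<Union>(Pow ` F)"
      using above_iff[of U] int_lattice_le_Union[of U "Pow ` F"] by auto
  qed
qed

lemma sum_mobius_upper_set_int_lattice_Pow_image: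
  assumes F: "nontrivial_family F"
  shows "(\<Sum>U\<in>{U \<in> int_lattice (Pow ` F). Pow X \<subseteq> U \<and> U \<noteq> \<Union>(Pow ` F)}.
            mobius (int_lattice (Pow ` F)) U (\<Union>(Pow ` F)))
         = (if \<exists>A\<in>F. X \<subseteq> A then -1 else 0)"
proof (cases "\<exists>A\<in>F. X \<subseteq> A")
  case True
  then obtain A where A: "A \<in> F" "X \<subseteq> A"
    by blast
  have "finite (int_lattice (Pow ` F))"
    using F unfolding nontrivial_family_def by (simp add: finite_int_lattice)
  with upper_set_int_lattice_Pow_image[OF F A] show ?thesis
    using True by (simp add: sum_mobius_half_open_interval Union_mem_int_lattice)
next
  case False
  have no_upper: "{U \<in> int_lattice (Pow ` F). Pow X \<subseteq> U \<and> U \<noteq> \<Union>(Pow ` F)} = {}"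
  proof (rule equals0I)
    fix U assume "U \<in> {U \<in> int_lattice (Pow ` F). Pow X \<subseteq> U \<and> U \<noteq> \<Union>(Pow ` F)}"
    then have U: "U \<in> int_lattice (Pow ` F)" "U \<noteq> \<Union>(Pow ` F)" "Pow X \<subseteq> U"
      by auto
    obtain T where T: "T \<subseteq> F" "T \<noteq> {}" "U = Pow (\<Inter>T)"
      using U(1,2) by (rule int_lattice_Pow_imageE)
    have "X \<subseteq> \<Inter>T"
      using U(3) unfolding T(3) Pow_subset_Pow_iff .
    with T(1,2) False show False
      by blast
  qed
  show ?thesis
    unfolding no_upper using False by simp
qed

lemma sum_mobius_Pow_supersets:
  assumes S: "finite S" and F: "F \<subseteq> Pow S" "nontrivial_family F"
  shows "(\<Sum>X'\<in>{X'. X \<subseteq> X' \<and> X' \<subseteq> S}. mobius (int_lattice (Pow ` F)) (Pow X') (\<Union>(Pow ` F)))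
         = (\<Sum>U\<in>{U \<in> int_lattice (Pow ` F). Pow X \<subseteq> U \<and> U \<noteq> \<Union>(Pow ` F)}.
              mobius (int_lattice (Pow ` F)) U (\<Union>(Pow ` F)))"
proof -
  let ?supersets = "{X'. X \<subseteq> X' \<and> X' \<subseteq> S}"
  let ?\<mu> = "\<lambda>U. mobius (int_lattice (Pow ` F)) U (\<Union>(Pow ` F))"
  have "inj_on Pow ?supersets"
    by (rule inj_onI) (metis Pow_iff Pow_top subset_antisym)
  then have "(\<Sum>X'\<in>?supersets. ?\<mu> (Pow X')) = (\<Sum>U\<in>Pow ` ?supersets. ?\<mu> U)"
    by (simp add: sum.reindex)
  also have "\<dots> = (\<Sum>U\<in>Pow ` ?supersets \<inter> int_lattice (Pow ` F). ?\<mu> U)"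
    using S by (intro sum.mono_neutral_right) (auto dest: mobius_nonzero_imp_mem)
  also have "Pow ` ?supersets \<inter> int_lattice (Pow ` F)
             = {U \<in> int_lattice (Pow ` F). Pow X \<subseteq> U \<and> U \<noteq> \<Union>(Pow ` F)}"
  proof (intro equalityI subsetI)
    fix U assume "U \<in> Pow ` ?supersets \<inter> int_lattice (Pow ` F)"
    then show "U \<in> {U \<in> int_lattice (Pow ` F). Pow X \<subseteq> U \<and> U \<noteq> \<Union>(Pow ` F)}"
      using Pow_neq_Union_Pow_image[OF F(2)] by (auto simp del: Pow_iff)
  next
    fix U assume U: "U \<in> {U \<in> int_lattice (Pow ` F). Pow X \<subseteq> U \<and> U \<noteq> \<Union>(Pow ` F)}"
    then have "U \<in> int_lattice (Pow ` F)" "U \<noteq> \<Union>(Pow ` F)"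
      by auto
    then obtain X' where X': "X' \<subseteq> S" "U = Pow X'"
      by (rule int_lattice_Pow_image_PowE[OF F(1)])
    have "Pow X \<subseteq> Pow X'"
      using U unfolding X'(2) by blast
    with X' U show "U \<in> Pow ` ?supersets \<inter> int_lattice (Pow ` F)"
      unfolding Pow_subset_Pow_iff by blast
  qed
  finally show ?thesis .
qed

lemma gen_mobius_downset_eq_mobius:
  assumes S: "finite S" and F: "F \<subseteq> Pow S" "nontrivial_family F" and X: "X \<subseteq> S"
  shows "gen_mobius S {Y. Y \<subseteq> S \<and> (\<exists>A\<in>F. Y \<subseteq> A)} X
         = - mobius (int_lattice (Pow ` F)) (Pow X) (\<Union>(Pow ` F))"
proof (rule gen_mobius_eqI[OF S _ X])
  fix Y assume "Y \<subseteq> S"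
  then show "(\<Sum>Y'\<in>{Y'. Y \<subseteq> Y' \<and> Y' \<subseteq> S}. - mobius (int_lattice (Pow ` F)) (Pow Y') (\<Union>(Pow ` F)))
             = (if Y \<in> {Y. Y \<subseteq> S \<and> (\<exists>A\<in>F. Y \<subseteq> A)} then 1 else 0)"
    by (simp add: sum_negf sum_mobius_Pow_supersets[OF S F]
        sum_mobius_upper_set_int_lattice_Pow_image[OF F(2)])
qed

lemma ncpd_downset_eq:
  assumes "finite S" "F \<subseteq> Pow S" "nontrivial_family F"
  shows "ncpd S {Y. Y \<subseteq> S \<and> (\<exists>A\<in>F. Y \<subseteq> A)}
         = {Pow X | X. X \<subseteq> S \<and> mobius (int_lattice (Pow ` F)) (Pow X) (\<Union>(Pow ` F)) \<noteq> 0}"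
proof -
  have down_eq_Pow: "{Y. Y \<subseteq> S \<and> Y \<subseteq> X} = Pow X" if "X \<subseteq> S" for X
    using that by blast
  show ?thesis
    unfolding ncpd_def
    by (intro Collect_cong ex_cong1) (auto simp: down_eq_Pow gen_mobius_downset_eq_mobius[OF assms])
qed

lemma nci_int_lattice_Pow_image_eq:
  assumes F: "F \<subseteq> Pow S" "nontrivial_family F"
  shows "nci (int_lattice (Pow ` F)) (\<Union>(Pow ` F))
         = {Pow X | X. X \<subseteq> S \<and> mobius (int_lattice (Pow ` F)) (Pow X) (\<Union>(Pow ` F)) \<noteq> 0}"
proof (intro equalityI subsetI)
  fix U assume "U \<in> nci (int_lattice (Pow ` F)) (\<Union>(Pow ` F))"
  then have U: "U \<in> int_lattice (Pow ` F)" "U \<noteq> \<Union>(Pow ` F)"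
    "mobius (int_lattice (Pow ` F)) U (\<Union>(Pow ` F)) \<noteq> 0"
    unfolding nci_def by auto
  obtain X where "X \<subseteq> S" "U = Pow X"
    using U(1,2) by (rule int_lattice_Pow_image_PowE[OF F(1)])
  with U(3) show "U \<in> {Pow X | X. X \<subseteq> S \<and> mobius (int_lattice (Pow ` F)) (Pow X) (\<Union>(Pow ` F)) \<noteq> 0}"
    by blast
next
  fix U assume "U \<in> {Pow X | X. X \<subseteq> S \<and> mobius (int_lattice (Pow ` F)) (Pow X) (\<Union>(Pow ` F)) \<noteq> 0}"
  then show "U \<in> nci (int_lattice (Pow ` F)) (\<Union>(Pow ` F))"
    unfolding nci_def
    using mobius_nonzero_imp_mem Pow_neq_Union_Pow_image[OF F(2)] by auto
qed

theorem lemma5p5: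
  fixes S :: "'a set" and F :: "'a set set"
  assumes "finite S"
    and "F \<subseteq> Pow S"
    and "nontrivial_family F"
  shows "ncpd S {Y. Y \<subseteq> S \<and> (\<exists>X\<in>F. Y \<subseteq> X)}
         = nci (int_lattice ((\<lambda>X. {Y. Y \<subseteq> S \<and> Y \<subseteq> X}) ` F))
               (\<Union>((\<lambda>X. {Y. Y \<subseteq> S \<and> Y \<subseteq> X}) ` F))"
proof -
  have "(\<lambda>X. {Y. Y \<subseteq> S \<and> Y \<subseteq> X}) ` F = Pow ` F"
    by (intro image_cong refl) (use assms(2) in blast)
  then show ?thesis
    using ncpd_downset_eq[OF assms] nci_int_lattice_Pow_image_eq[OF assms(2,3)] by simp
qed

end
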